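(* Let $K$ be a field with algebraic closure $\overline{K}$, $U=\{u_1,\dots,u_d\}$ parameters and $X=\{x_1,\dots,x_n\}$ variables ordered $u_1\prec\dots\prec u_d\prec x_1\prec\dots\prec x_n$. Let $\mathbf{P}$ be a parametric system in $K[U][X]$ and $\{\mathbf{C}_1,\dots,\mathbf{C}_m\}$ a Wu's decomposition of $\mathbf{P}$ in $K[U][X]$. Let $\mathbb{S}$ be the set of those $\mathbf{C}_i$ that are non-contradictory ascending chains and $\mathbb{CS}$ the set of those $\mathbf{C}_i$ that are contradictory ascending chains. Then for every $a\in\overline{K}^d\setminus\bigcup_{\mathbf{CS}\in\mathbb{CS}}\mathrm{V}^U(\mathbf{CS})$, \[\mathrm{V}(\mathbf{P}(a))=\bigcup_{\mathbf{C}\in\mathbb{S}}\mathrm{V}(\mathbf{C}(a)\setminus\mathrm{I}(\mathbf{C})(a)).\]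
   Context: A parametric system is a non-empty finite subset of $K[U][X]\setminus K[X]$. For $F\in K[U][X]\setminus\{0\}$, its class is the largest $p$ with $\deg(F,x_p)>0$; if it is $p>0$ the main variable is $x_p$ and, writing $F=C_0x_p^m+\dots+C_m$ with $C_0\ne0$, the initial is $\mathrm{I}(F)=C_0$. A non-contradictory ascending chain is a set $\{C_1,\dots,C_t\}$ with $0<\mathrm{cls}(C_1)<\dots<\mathrm{cls}(C_t)$ and each $C_i$ reduced w.r.t. the earlier ones (degree in $\mathrm{mvar}(C_j)$ less than $\deg(C_j,\mathrm{mvar}(C_j))$ for $j<i$); a contradictory ascending chain is a set $\{F\}$ with $0\neq F\in K[U]$. $\mathrm{I}(\mathbf{C})=\prod_i\mathrm{I}(C_i)$. An ascending chain $\mathbf{C}$ is a characteristic set of $\mathbf{P}$ if $\mathbf{C}\subset\langle\mathbf{P}\rangle_{K[U][X]}$ and the successive pseudo-remainder (w.r.t. main variables, last element first) of every element of $\mathbf{P}$ by $\mathbf{C}$ is $0$. A Wu's decomposition of $\mathbf{P}$ is the finite set of ascending chains produced by Wu's method: compute a characteristic set $\mathbf{C}$ of $\mathbf{P}$; if $\mathbf{C}=\{C_1,\dots,C_t\}$ is non-contradictory, recursively apply the method to each $\mathbf{P}\cup\mathbf{C}\cup\{\mathrm{I}(C_i)\}$, $1\le i\le t$; all characteristic sets obtained form the decomposition. For $a\in\overline{K}^d$, $F(a)$ denotes substitution of $a$ for $U$; $\mathrm{V}^U(\mathbf{B})$ is the common zero set in $\overline{K}^d$ of $\mathbf{B}\subset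 K[U]$; for subsets of $\overline{K}[X]$, $\mathrm{V}(\cdot)$ is the common zero set in $\overline{K}^n$ and $\mathrm{V}(\mathbf{Q}\setminus H)=\mathrm{V}(\mathbf{Q})\setminus\mathrm{V}(H)$. *)

theory Defs
  imports "HOL-Library.Poly_Mapping" "HOL-Algebra.Algebraic_Closure_Type"
begin

(* Variables: Inl i stands for the parameter u_i (1 <= i <= d),
   Inr j stands for the variable x_j (1 <= j <= n). *)

type_synonym var = "nat + nat"
type_synonym 'k mpoly = "(var \<Rightarrow>\<^sub>0 nat) \<Rightarrow>\<^sub>0 'k"

definition vars :: "'k::zero mpoly \<Rightarrow> var set" where
  "vars F = (\<Union>m\<in>Poly_Mapping.keys F. Poly_Mapping.keys m)"

definition KUX :: "nat \<Rightarrow> nat \<Rightarrow> 'k::zero mpoly set" where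
  "KUX d n = {F. vars F \<subseteq> Inl ` {1..d} \<union> Inr ` {1..n}}"

definition KU :: "nat \<Rightarrow> 'k::zero mpoly set" where
  "KU d = {F. vars F \<subseteq> Inl ` {1..d}}"

definition KX :: "nat \<Rightarrow> 'k::zero mpoly set" where
  "KX n = {F. vars F \<subseteq> Inr ` {1..n}}"

definition deg :: "'k::zero mpoly \<Rightarrow> var \<Rightarrow> nat" where
  "deg F v = Max (insert 0 ((\<lambda>m. Poly_Mapping.lookup m v) ` Poly_Mapping.keys F))"

definition cls :: "'k::zero mpoly \<Rightarrow> nat" where
  "cls F = Max (insert 0 {p. deg F (Inr p) > 0})"

definition init :: "'k::comm_ring_1 mpoly \<Rightarrow> 'k mpoly" where
  "init F = (let v = Inr (cls F); e = deg F v in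
     (\<Sum>m\<in>{m\<in>Poly_Mapping.keys F. Poly_Mapping.lookup m v = e}.
        Poly_Mapping.single (m - Poly_Mapping.single v e) (Poly_Mapping.lookup F m)))"

definition prem :: "'k::comm_ring_1 mpoly \<Rightarrow> 'k mpoly \<Rightarrow> 'k mpoly" where
  "prem G F = (if cls F = 0 then 0 else
     (let v = Inr (cls F); m = deg F v; s = (deg G v + 1) - m in
       THE R. deg R v < m \<and> (\<exists>Q. init F ^ s * G = Q * F + R)))"

definition noncontra_chain :: "'k::zero mpoly set \<Rightarrow> bool" where
  "noncontra_chain C \<longleftrightarrow> finite C \<and> C \<noteq> {} \<and> (\<forall>c\<in>C. cls c > 0) \<and> inj_on cls C \<and>
     (\<forall>c\<in>C. \<forall>c'\<in>C. cls c' < cls c \<longrightarrow> deg c (Inr (cls c')) < deg c' (Inr (cls c')))"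

definition contra_chain :: "nat \<Rightarrow> 'k::zero mpoly set \<Rightarrow> bool" where
  "contra_chain d C \<longleftrightarrow> (\<exists>F. C = {F} \<and> F \<noteq> 0 \<and> F \<in> KU d)"

definition asc_chain :: "nat \<Rightarrow> 'k::zero mpoly set \<Rightarrow> bool" where
  "asc_chain d C \<longleftrightarrow> noncontra_chain C \<or> contra_chain d C"

definition chain_init :: "'k::comm_ring_1 mpoly set \<Rightarrow> 'k mpoly" where
  "chain_init C = (\<Prod>c\<in>C. init c)"

(* successive pseudo-remainder of G by C, last element (highest class) first *)
definition prem_chain :: "'k::comm_ring_1 mpoly \<Rightarrow> 'k mpoly set \<Rightarrow> 'k mpoly" where
  "prem_chain G C = foldr (\<lambda>c r. prem r c) (sorted_key_list_of_set cls C) G"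

definition ideal_KUX :: "nat \<Rightarrow> nat \<Rightarrow> 'k::comm_ring_1 mpoly set \<Rightarrow> 'k mpoly set" where
  "ideal_KUX d n P = {\<Sum>p\<in>S. q p * p | S q. finite S \<and> S \<subseteq> P \<and> (\<forall>p\<in>S. q p \<in> KUX d n)}"

definition char_set :: "nat \<Rightarrow> nat \<Rightarrow> 'k::comm_ring_1 mpoly set \<Rightarrow> 'k mpoly set \<Rightarrow> bool" where
  "char_set d n P C \<longleftrightarrow> asc_chain d C \<and> C \<subseteq> ideal_KUX d n P \<and> (\<forall>G\<in>P. prem_chain G C = 0)"

(* wu_decomp d n P D : D is a Wu's decomposition of P (a possible output of Wu's method) *)
inductive wu_decomp :: "nat \<Rightarrow> nat \<Rightarrow> 'k::comm_ring_1 mpoly set \<Rightarrow> 'k mpoly set set \<Rightarrow> bool"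
  for d n where
  contra: "char_set d n P C \<Longrightarrow> contra_chain d C \<Longrightarrow> wu_decomp d n P {C}"
| noncontra: "char_set d n P C \<Longrightarrow> noncontra_chain C \<Longrightarrow>
     (\<forall>c\<in>C. wu_decomp d n (P \<union> C \<union> {init c}) (Ds c)) \<Longrightarrow>
     wu_decomp d n P ({C} \<union> (\<Union>c\<in>C. Ds c))"

definition parametric_system :: "nat \<Rightarrow> nat \<Rightarrow> 'k::zero mpoly set \<Rightarrow> bool" where
  "parametric_system d n P \<longleftrightarrow> P \<noteq> {} \<and> finite P \<and> P \<subseteq> KUX d n - KX n"

definition eval :: "(var \<Rightarrow> 'k::field alg_closure) \<Rightarrow> 'k mpoly \<Rightarrow> 'k alg_closure" where
  "eval pt F = (\<Sum>m\<in>Poly_Mapping.keys F. to_ac (Poly_Mapping.lookup F m) * (\<Prod>v\<in>Poly_Mapping.keys m. pt v ^ Poly_Mapping.lookup m v))"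

definition pt :: "(nat \<Rightarrow> 'a) \<Rightarrow> (nat \<Rightarrow> 'a) \<Rightarrow> var \<Rightarrow> 'a" where
  "pt a b = case_sum a b"

definition VU :: "'k::field mpoly set \<Rightarrow> (nat \<Rightarrow> 'k alg_closure) set" where
  "VU B = {a. \<forall>F\<in>B. eval (pt a (\<lambda>_. 0)) F = 0}"

definition V_spec :: "(nat \<Rightarrow> 'k::field alg_closure) \<Rightarrow> 'k mpoly set \<Rightarrow> 'k mpoly \<Rightarrow> (nat \<Rightarrow> 'k alg_closure) set" where
  "V_spec a Q H = {b. (\<forall>F\<in>Q. eval (pt a b) F = 0) \<and> eval (pt a b) H \<noteq> 0}"

definition V :: "(nat \<Rightarrow> 'k::field alg_closure) \<Rightarrow> 'k mpoly set \<Rightarrow> (nat \<Rightarrow> 'k alg_closure) set" where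
  "V a Q = {b. \<forall>F\<in>Q. eval (pt a b) F = 0}"

end

theory Submission
  imports Defs "HOL-Computational_Algebra.Polynomial"
begin

text \<open>The proof is an induction along the derivation of the Wu decomposition. A characteristic set
  \<open>C\<close> of \<open>P\<close> lies in the ideal of \<open>P\<close>, so every zero of \<open>P(a)\<close> is a zero of \<open>C(a)\<close>; there either
  no initial of \<open>C\<close> vanishes, or the point is a zero of one of the systems
  \<open>P \<union> C \<union> {I(c)}\<close> treated recursively. Conversely, at a zero of \<open>C(a)\<close> off \<open>I(C)\<close> the
  pseudo-division identities \<open>I(c)^s G = Q c + prem G c\<close>, applied along the successive
  pseudo-remainder of \<open>G \<in> P\<close> (which is \<open>0\<close>), show that \<open>G\<close> vanishes. A contradictory chain
  \<open>{F}\<close> with \<open>F(a) \<noteq> 0\<close> leaves no zeros at all, as \<open>F\<close> lies in the ideal of \<open>P\<close>.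

  The technical part is that the pseudo-remainder, defined by a definite description, satisfies
  the pseudo-division identity. Existence and uniqueness come from viewing a polynomial as a
  univariate polynomial in its main variable, with multivariate coefficients, and using
  pseudo-division and degree additivity there.\<close>

section \<open>Evaluation of polynomials along a coefficient homomorphism\<close>

definition monomial_value :: "('v \<Rightarrow> 'r::comm_semiring_1) \<Rightarrow> ('v \<Rightarrow>\<^sub>0 nat) \<Rightarrow> 'r" where
  "monomial_value x m = (\<Prod>v\<in>Poly_Mapping.keys m. x v ^ Poly_Mapping.lookup m v)"

lemma monomial_value_superset:
  assumes "finite S" "Poly_Mapping.keys m \<subseteq> S"
  shows "monomial_value x m = (\<Prod>v\<in>S. x v ^ Poly_Mapping.lookup m v)"
  unfolding monomial_value_def
  by (rule prod.mono_neutral_left) (use assms in \<open>auto simp: in_keys_iff\<close>)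

lemma monomial_value_0 [simp]: "monomial_value x 0 = 1"
  by (simp add: monomial_value_def)

lemma monomial_value_add: "monomial_value x (m + m') = monomial_value x m * monomial_value x m'"
proof -
  let ?S = "Poly_Mapping.keys m \<union> Poly_Mapping.keys m'"
  have "monomial_value x (m + m') = (\<Prod>v\<in>?S. x v ^ Poly_Mapping.lookup (m + m') v)"
    by (rule monomial_value_superset) (auto dest: set_mp[OF Poly_Mapping.keys_add])
  also have "\<dots> = (\<Prod>v\<in>?S. x v ^ Poly_Mapping.lookup m v) * (\<Prod>v\<in>?S. x v ^ Poly_Mapping.lookup m' v)"
    by (simp add: lookup_add power_add prod.distrib)
  also have "\<dots> = monomial_value x m * monomial_value x m'"
    by (simp add: monomial_value_superset[symmetric])
  finally show ?thesis .
qed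

lemma monomial_value_single: "monomial_value x (Poly_Mapping.single v k) = x v ^ k"
  by (cases "k = 0") (auto simp: monomial_value_def)

lemma monomial_value_cong:
  "(\<And>v. v \<in> Poly_Mapping.keys m \<Longrightarrow> x v = y v) \<Longrightarrow> monomial_value x m = monomial_value y m"
  by (simp add: monomial_value_def)

lemma poly_mapping_sum_single:
  "F = (\<Sum>m\<in>Poly_Mapping.keys F. Poly_Mapping.single m (Poly_Mapping.lookup F m))"
  by (rule poly_mapping_eqI) (simp add: lookup_sum lookup_single when_def in_keys_iff)

definition hom_eval ::
    "('k::zero \<Rightarrow> 'r::comm_ring_1) \<Rightarrow> ('v \<Rightarrow> 'r) \<Rightarrow> (('v \<Rightarrow>\<^sub>0 nat) \<Rightarrow>\<^sub>0 'k) \<Rightarrow> 'r" where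
  "hom_eval f x F = (\<Sum>m\<in>Poly_Mapping.keys F. f (Poly_Mapping.lookup F m) * monomial_value x m)"

locale comm_ring_hom =
  fixes f :: "'k::comm_ring_1 \<Rightarrow> 'r::comm_ring_1"
  assumes hom_0: "f 0 = 0" and hom_1: "f 1 = 1"
    and hom_add: "f (a + b) = f a + f b" and hom_mult: "f (a * b) = f a * f b"
begin

lemma hom_eval_superset:
  assumes "finite S" "Poly_Mapping.keys F \<subseteq> S"
  shows "hom_eval f x F = (\<Sum>m\<in>S. f (Poly_Mapping.lookup F m) * monomial_value x m)"
  unfolding hom_eval_def
  by (rule sum.mono_neutral_left) (use assms in \<open>auto simp: in_keys_iff hom_0\<close>)

lemma hom_eval_0 [simp]: "hom_eval f x 0 = 0"
  by (simp add: hom_eval_def)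

lemma hom_eval_add: "hom_eval f x (F + G) = hom_eval f x F + hom_eval f x G"
proof -
  let ?S = "Poly_Mapping.keys F \<union> Poly_Mapping.keys G"
  have "hom_eval f x (F + G) = (\<Sum>m\<in>?S. f (Poly_Mapping.lookup (F + G) m) * monomial_value x m)"
    by (rule hom_eval_superset) (auto dest: set_mp[OF Poly_Mapping.keys_add])
  also have "\<dots> = (\<Sum>m\<in>?S. f (Poly_Mapping.lookup F m) * monomial_value x m)
                + (\<Sum>m\<in>?S. f (Poly_Mapping.lookup G m) * monomial_value x m)"
    by (simp add: lookup_add hom_add distrib_right sum.distrib)
  also have "\<dots> = hom_eval f x F + hom_eval f x G"
    by (simp add: hom_eval_superset[symmetric])
  finally show ?thesis .
qed

lemma hom_eval_sum: "hom_eval f x (\<Sum>i\<in>A. g i) = (\<Sum>i\<in>A. hom_eval f x (g i))"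
  by (induction A rule: infinite_finite_induct) (auto simp: hom_eval_add)

lemma hom_eval_single: "hom_eval f x (Poly_Mapping.single m c) = f c * monomial_value x m"
  by (cases "c = 0") (auto simp: hom_eval_def hom_0)

lemma hom_eval_1 [simp]: "hom_eval f x 1 = 1"
  using hom_eval_single[of x 0 1] by (simp add: hom_1)

lemma hom_eval_diff: "hom_eval f x (F - G) = hom_eval f x F - hom_eval f x G"
  using hom_eval_add[of x "F - G" G] by (simp add: algebra_simps)

lemma hom_eval_mult: "hom_eval f x (F * G) = hom_eval f x F * hom_eval f x G"
proof -
  let ?term = "\<lambda>H m. Poly_Mapping.single m (Poly_Mapping.lookup H m)"
  have "F * G = (\<Sum>m\<in>Poly_Mapping.keys F. ?term F m) * (\<Sum>m\<in>Poly_Mapping.keys G. ?term G m)"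
    using poly_mapping_sum_single[of F] poly_mapping_sum_single[of G] by simp
  also have "\<dots> = (\<Sum>m\<in>Poly_Mapping.keys F. \<Sum>m'\<in>Poly_Mapping.keys G.
      Poly_Mapping.single (m + m') (Poly_Mapping.lookup F m * Poly_Mapping.lookup G m'))"
    by (simp add: sum_product mult_single)
  finally have "hom_eval f x (F * G) = (\<Sum>m\<in>Poly_Mapping.keys F. \<Sum>m'\<in>Poly_Mapping.keys G.
      f (Poly_Mapping.lookup F m) * monomial_value x m * (f (Poly_Mapping.lookup G m') * monomial_value x m'))"
    by (simp add: hom_eval_sum hom_eval_single hom_mult monomial_value_add mult_ac)
  also have "\<dots> = hom_eval f x F * hom_eval f x G"
    by (simp add: hom_eval_def sum_product)
  finally show ?thesis .
qed

lemma hom_eval_power: "hom_eval f x (F ^ k) = hom_eval f x F ^ k"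
  by (induction k) (auto simp: hom_eval_mult)

lemma hom_eval_prod: "hom_eval f x (\<Prod>i\<in>A. g i) = (\<Prod>i\<in>A. hom_eval f x (g i))"
  by (induction A rule: infinite_finite_induct) (auto simp: hom_eval_mult)

end

interpretation to_ac: comm_ring_hom to_ac
  by standard auto

lemma eval_eq_hom_eval: "eval p F = hom_eval to_ac p F"
  by (simp add: eval_def hom_eval_def monomial_value_def)

lemma
  shows eval_0: "eval p 0 = 0"
    and eval_add: "eval p (F + G) = eval p F + eval p G"
    and eval_mult: "eval p (F * G) = eval p F * eval p G"
    and eval_power: "eval p (F ^ k) = eval p F ^ k"
    and eval_sum: "eval p (\<Sum>i\<in>A. g i) = (\<Sum>i\<in>A. eval p (g i))"
    and eval_prod: "eval p (\<Prod>i\<in>A. g i) = (\<Prod>i\<in>A. eval p (g i))"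
  by (simp_all add: eval_eq_hom_eval to_ac.hom_eval_add to_ac.hom_eval_mult
      to_ac.hom_eval_power to_ac.hom_eval_sum to_ac.hom_eval_prod)

lemma eval_cong_vars:
  assumes "\<And>w. w \<in> vars F \<Longrightarrow> p w = p' w"
  shows "eval p F = eval p' F"
  unfolding eval_eq_hom_eval hom_eval_def
  by (intro sum.cong refl arg_cong[where f = "(*) _"] monomial_value_cong)
     (use assms in \<open>auto simp: vars_def\<close>)

section \<open>A multivariate polynomial as a univariate polynomial in one variable\<close>

definition Var :: "'v \<Rightarrow> (('v \<Rightarrow>\<^sub>0 nat) \<Rightarrow>\<^sub>0 'k::comm_ring_1)" where
  "Var v = Poly_Mapping.single (Poly_Mapping.single v 1) 1"

lemma Var_power: "Var v ^ k = Poly_Mapping.single (Poly_Mapping.single v k) 1"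
  by (induction k) (auto simp: Var_def mult_single single_add[symmetric] add.commute)

lemma prod_single_1:
  "(\<Prod>i\<in>A. Poly_Mapping.single (g i) (1::'k::comm_semiring_1)) = Poly_Mapping.single (\<Sum>i\<in>A. g i) 1"
  by (induction A rule: infinite_finite_induct) (auto simp: mult_single)

lemma monomial_value_Var: "monomial_value Var m = (Poly_Mapping.single m 1 :: ('v \<Rightarrow>\<^sub>0 nat) \<Rightarrow>\<^sub>0 'k::comm_ring_1)"
proof -
  have "monomial_value Var m = (\<Prod>v\<in>Poly_Mapping.keys m.
          Poly_Mapping.single (Poly_Mapping.single v (Poly_Mapping.lookup m v)) (1::'k))"
    by (simp add: monomial_value_def Var_power)
  also have "\<dots> = Poly_Mapping.single m 1"
    by (simp only: prod_single_1 flip: poly_mapping_sum_single)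
  finally show ?thesis .
qed

definition remove_var :: "'v \<Rightarrow> ('v \<Rightarrow>\<^sub>0 nat) \<Rightarrow> ('v \<Rightarrow>\<^sub>0 nat)" where
  "remove_var v m = m - Poly_Mapping.single v (Poly_Mapping.lookup m v)"

lemma remove_var_add_single: "remove_var v m + Poly_Mapping.single v (Poly_Mapping.lookup m v) = m"
  by (rule poly_mapping_eqI) (auto simp: remove_var_def lookup_add lookup_minus lookup_single when_def)

lemma lookup_remove_var: "Poly_Mapping.lookup (remove_var v m) w = (if w = v then 0 else Poly_Mapping.lookup m w)"
  by (auto simp: remove_var_def lookup_minus lookup_single when_def)

lemma not_in_keys_remove_var: "v \<notin> Poly_Mapping.keys (remove_var v m)"
  by (simp add: in_keys_iff lookup_remove_var)

lemma remove_var_id: "Poly_Mapping.lookup m v = 0 \<Longrightarrow> remove_var v m = m"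
  using remove_var_add_single[of v m] by simp

lemma monomial_value_remove_var:
  "monomial_value x m = monomial_value x (remove_var v m) * x v ^ Poly_Mapping.lookup m v"
  by (subst remove_var_add_single[of v m, symmetric]) (simp add: monomial_value_add monomial_value_single lookup_remove_var)

definition free_of :: "'v \<Rightarrow> (('v \<Rightarrow>\<^sub>0 nat) \<Rightarrow>\<^sub>0 'k::zero) \<Rightarrow> bool" where
  "free_of v F \<longleftrightarrow> (\<forall>m\<in>Poly_Mapping.keys F. Poly_Mapping.lookup m v = 0)"

lemma free_of_sum: "(\<And>i. i \<in> A \<Longrightarrow> free_of v (g i)) \<Longrightarrow> free_of v (\<Sum>i\<in>A. g i)"
  unfolding free_of_def using keys_sum[of g A] by blast

lemma free_of_single: "Poly_Mapping.lookup m v = 0 \<Longrightarrow> free_of v (Poly_Mapping.single m c)"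
  by (simp add: free_of_def)

definition subst_zero :: "'v \<Rightarrow> (('v \<Rightarrow>\<^sub>0 nat) \<Rightarrow>\<^sub>0 'k::comm_ring_1) \<Rightarrow> (('v \<Rightarrow>\<^sub>0 nat) \<Rightarrow>\<^sub>0 'k)" where
  "subst_zero v F = hom_eval (Poly_Mapping.single 0) (\<lambda>w. if w = v then 0 else Var w) F"

interpretation const_poly: comm_ring_hom "Poly_Mapping.single (0::'m::comm_monoid_add) :: 'k::comm_ring_1 \<Rightarrow> _"
  by standard (auto simp: single_add mult_single)

lemma subst_zero_eq:
  fixes F :: "('v \<Rightarrow>\<^sub>0 nat) \<Rightarrow>\<^sub>0 'k::comm_ring_1"
  shows "subst_zero v F = (\<Sum>m\<in>Poly_Mapping.keys F.
     if Poly_Mapping.lookup m v = 0 then Poly_Mapping.single m (Poly_Mapping.lookup F m) else 0)"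
proof -
  have "monomial_value (\<lambda>w. if w = v then 0 else Var w) m =
        (if Poly_Mapping.lookup m v = 0 then Poly_Mapping.single m 1 else (0::('v \<Rightarrow>\<^sub>0 nat) \<Rightarrow>\<^sub>0 'k))" for m
  proof -
    have "monomial_value (\<lambda>w. if w = v then 0 else Var w) (remove_var v m) =
          (monomial_value Var (remove_var v m) :: ('v \<Rightarrow>\<^sub>0 nat) \<Rightarrow>\<^sub>0 'k)"
      by (rule monomial_value_cong) (metis not_in_keys_remove_var)
    then show ?thesis
      by (subst monomial_value_remove_var[of _ _ v]) (auto simp: monomial_value_Var remove_var_id power_0_left)
  qed
  then show ?thesis
    unfolding subst_zero_def hom_eval_def by (intro sum.cong) (auto simp: mult_single)
qed

lemma subst_zero_id: "free_of v F \<Longrightarrow> subst_zero v F = F"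
  unfolding subst_zero_eq free_of_def
  by (subst (2) poly_mapping_sum_single[of F]) (rule sum.cong, auto)

lemma free_of_subst_zero: "free_of v (subst_zero v F)"
  unfolding subst_zero_eq by (rule free_of_sum) (auto intro: free_of_single simp: free_of_def)

lemma
  shows subst_zero_0: "subst_zero v 0 = 0"
    and subst_zero_add: "subst_zero v (F + G) = subst_zero v F + subst_zero v G"
    and subst_zero_mult: "subst_zero v (F * G) = subst_zero v F * subst_zero v G"
    and subst_zero_power: "subst_zero v (F ^ k) = subst_zero v F ^ k"
    and subst_zero_sum: "subst_zero v (\<Sum>i\<in>A. g i) = (\<Sum>i\<in>A. subst_zero v (g i))"
  unfolding subst_zero_def
  by (simp_all add: const_poly.hom_eval_add const_poly.hom_eval_mult const_poly.hom_eval_power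
      const_poly.hom_eval_sum)

definition to_univ :: "'v \<Rightarrow> (('v \<Rightarrow>\<^sub>0 nat) \<Rightarrow>\<^sub>0 'k::comm_ring_1) \<Rightarrow> (('v \<Rightarrow>\<^sub>0 nat) \<Rightarrow>\<^sub>0 'k) poly" where
  "to_univ v F = hom_eval (\<lambda>c. monom (Poly_Mapping.single 0 c) 0)
     (\<lambda>w. if w = v then monom 1 1 else monom (Var w) 0) F"

interpretation const_univ: comm_ring_hom "\<lambda>c::'k::comm_ring_1. monom (Poly_Mapping.single (0::'m::comm_monoid_add) c) 0"
  by standard (auto simp: single_add mult_single add_monom mult_monom)

lemma
  shows to_univ_diff: "to_univ v (F - G) = to_univ v F - to_univ v G"
    and to_univ_mult: "to_univ v (F * G) = to_univ v F * to_univ v G"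
  unfolding to_univ_def
  by (simp_all add: const_univ.hom_eval_diff const_univ.hom_eval_mult)

lemma prod_monom_0: "(\<Prod>i\<in>A. monom (g i) 0) = monom (\<Prod>i\<in>A. g i) 0"
  by (induction A rule: infinite_finite_induct) (simp_all add: mult_monom)

lemma to_univ_eq:
  fixes F :: "('v \<Rightarrow>\<^sub>0 nat) \<Rightarrow>\<^sub>0 'k::comm_ring_1"
  shows "to_univ v F = (\<Sum>m\<in>Poly_Mapping.keys F.
     monom (Poly_Mapping.single (remove_var v m) (Poly_Mapping.lookup F m)) (Poly_Mapping.lookup m v))"
proof -
  have "monomial_value (\<lambda>w. if w = v then monom 1 1 else monom (Var w) 0) m =
        monom (Poly_Mapping.single (remove_var v m) 1 :: ('v \<Rightarrow>\<^sub>0 nat) \<Rightarrow>\<^sub>0 'k) (Poly_Mapping.lookup m v)" for m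
  proof -
    have "monomial_value (\<lambda>w. if w = v then monom 1 1 else monom (Var w) 0) (remove_var v m) =
          monomial_value (\<lambda>w. monom (Var w :: ('v \<Rightarrow>\<^sub>0 nat) \<Rightarrow>\<^sub>0 'k) 0) (remove_var v m)"
      by (rule monomial_value_cong) (metis not_in_keys_remove_var)
    also have "\<dots> = monom (monomial_value Var (remove_var v m)) 0"
      unfolding monomial_value_def monom_power mult_0 by (rule prod_monom_0)
    finally show ?thesis
      by (subst monomial_value_remove_var[of _ _ v]) (simp add: monomial_value_Var monom_power mult_monom)
  qed
  then show ?thesis
    unfolding to_univ_def hom_eval_def by (intro sum.cong) (auto simp: mult_monom mult_single)
qed

lemma coeff_to_univ:
  "coeff (to_univ v F) i = (\<Sum>m\<in>{m\<in>Poly_Mapping.keys F. Poly_Mapping.lookup m v = i}.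
     Poly_Mapping.single (remove_var v m) (Poly_Mapping.lookup F m))"
  unfolding to_univ_eq coeff_sum coeff_monom by (simp add: sum.inter_filter)

lemma free_of_coeff_to_univ: "free_of v (coeff (to_univ v F) i)"
  unfolding coeff_to_univ by (rule free_of_sum) (auto intro: free_of_single simp: lookup_remove_var)

lemma coeff_to_univ_neq_0_iff:
  "coeff (to_univ v F) i \<noteq> 0 \<longleftrightarrow> (\<exists>m\<in>Poly_Mapping.keys F. Poly_Mapping.lookup m v = i)"
proof
  assume nonzero: "coeff (to_univ v F) i \<noteq> 0"
  show "\<exists>m\<in>Poly_Mapping.keys F. Poly_Mapping.lookup m v = i"
  proof (rule ccontr)
    assume "\<not> (\<exists>m\<in>Poly_Mapping.keys F. Poly_Mapping.lookup m v = i)"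
    then have "{m\<in>Poly_Mapping.keys F. Poly_Mapping.lookup m v = i} = {}" by blast
    then have "coeff (to_univ v F) i = 0"
      unfolding coeff_to_univ by (simp only: sum.empty)
    with nonzero show False ..
  qed
next
  assume "\<exists>m\<in>Poly_Mapping.keys F. Poly_Mapping.lookup m v = i"
  then obtain m0 where m0: "m0 \<in> Poly_Mapping.keys F" "Poly_Mapping.lookup m0 v = i" by blast
  let ?S = "{m\<in>Poly_Mapping.keys F. Poly_Mapping.lookup m v = i}"
  have "remove_var v m = remove_var v m0 \<longleftrightarrow> m = m0" if "m \<in> ?S" for m
  proof
    assume "remove_var v m = remove_var v m0"
    then have "remove_var v m + Poly_Mapping.single v (Poly_Mapping.lookup m v) =
               remove_var v m0 + Poly_Mapping.single v (Poly_Mapping.lookup m0 v)"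
      using that m0 by simp
    then show "m = m0"
      by (simp only: remove_var_add_single)
  qed simp
  then have "Poly_Mapping.lookup (coeff (to_univ v F) i) (remove_var v m0) =
             (\<Sum>m\<in>?S. if m = m0 then Poly_Mapping.lookup F m0 else 0)"
    unfolding coeff_to_univ lookup_sum by (intro sum.cong) (auto simp: lookup_single when_def)
  also have "\<dots> = Poly_Mapping.lookup F m0"
    using m0 by (simp add: sum.delta)
  finally show "coeff (to_univ v F) i \<noteq> 0"
    using m0(1) by (auto simp: in_keys_iff)
qed

definition from_univ :: "'v \<Rightarrow> (('v \<Rightarrow>\<^sub>0 nat) \<Rightarrow>\<^sub>0 'k::comm_ring_1) poly \<Rightarrow> (('v \<Rightarrow>\<^sub>0 nat) \<Rightarrow>\<^sub>0 'k)" where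
  "from_univ v p = poly p (Var v)"

lemma from_univ_to_univ: "from_univ v (to_univ v F) = F"
proof -
  have "from_univ v (to_univ v F) = (\<Sum>m\<in>Poly_Mapping.keys F. Poly_Mapping.single m (Poly_Mapping.lookup F m))"
    unfolding from_univ_def to_univ_eq poly_sum poly_monom Var_power
    by (intro sum.cong refl) (simp add: mult_single remove_var_add_single)
  then show ?thesis
    using poly_mapping_sum_single[of F] by simp
qed

lemma map_poly_subst_zero_add:
  "map_poly (subst_zero v) (p + q) = map_poly (subst_zero v) p + map_poly (subst_zero v) q"
  by (rule poly_eqI) (simp add: coeff_map_poly subst_zero_0 subst_zero_add)

lemma map_poly_subst_zero_mult:
  "map_poly (subst_zero v) (p * q) = map_poly (subst_zero v) p * map_poly (subst_zero v) q"
  by (rule poly_eqI) (simp add: coeff_map_poly coeff_mult subst_zero_0 subst_zero_sum subst_zero_mult)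

lemma map_poly_subst_zero_to_univ: "map_poly (subst_zero v) (to_univ v F) = to_univ v F"
  by (rule poly_eqI) (simp add: coeff_map_poly subst_zero_0 subst_zero_id free_of_coeff_to_univ)

section \<open>Degrees and pseudo-remainders\<close>

lemma lookup_le_deg: "m \<in> Poly_Mapping.keys F \<Longrightarrow> Poly_Mapping.lookup m v \<le> deg F v"
  unfolding deg_def by (rule Max_ge) auto

lemma deg_le: "(\<And>m. m \<in> Poly_Mapping.keys F \<Longrightarrow> Poly_Mapping.lookup m v \<le> k) \<Longrightarrow> deg F v \<le> k"
  unfolding deg_def by (subst Max_le_iff) auto

lemma deg_0 [simp]: "deg 0 v = 0"
  by (simp add: deg_def)

lemma deg_attained:
  assumes "F \<noteq> 0"
  shows "\<exists>m\<in>Poly_Mapping.keys F. Poly_Mapping.lookup m v = deg F v"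
proof -
  obtain m1 where m1: "m1 \<in> Poly_Mapping.keys F"
    using assms by (metis all_not_in_conv keys_eq_empty)
  have "deg F v \<in> insert 0 ((\<lambda>m. Poly_Mapping.lookup m v) ` Poly_Mapping.keys F)"
    unfolding deg_def by (rule Max_in) auto
  then show ?thesis
  proof
    assume "deg F v = 0"
    with lookup_le_deg[OF m1, of v] have "Poly_Mapping.lookup m1 v = deg F v" by simp
    with m1 show ?thesis by blast
  qed (metis imageE)
qed

lemma degree_to_univ: "degree (to_univ v F) = deg F v"
proof (cases "F = 0")
  case True
  then show ?thesis by (simp add: to_univ_def hom_eval_def)
next
  case False
  then have "coeff (to_univ v F) (deg F v) \<noteq> 0"
    using deg_attained by (auto simp: coeff_to_univ_neq_0_iff)
  then have "deg F v \<le> degree (to_univ v F)" and "to_univ v F \<noteq> 0"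
    by (auto intro: le_degree)
  moreover obtain m where "m \<in> Poly_Mapping.keys F" "Poly_Mapping.lookup m v = degree (to_univ v F)"
  proof -
    have "coeff (to_univ v F) (degree (to_univ v F)) \<noteq> 0"
      using \<open>to_univ v F \<noteq> 0\<close> by simp
    then show ?thesis
      using that unfolding coeff_to_univ_neq_0_iff by blast
  qed
  ultimately show ?thesis
    using lookup_le_deg[of m F v] by simp
qed

lemma deg_from_univ_le:
  assumes "\<And>i. free_of v (coeff p i)"
  shows "deg (from_univ v p) v \<le> degree p"
proof (rule deg_le)
  fix m assume "m \<in> Poly_Mapping.keys (from_univ v p)"
  then have "m \<in> (\<Union>i\<in>{..degree p}. Poly_Mapping.keys (coeff p i * Var v ^ i))"
    unfolding from_univ_def poly_altdef using keys_sum by (rule subsetD[rotated])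
  then obtain i where i: "i \<le> degree p" "m \<in> Poly_Mapping.keys (coeff p i * Var v ^ i)"
    by blast
  then obtain m' where "m' \<in> Poly_Mapping.keys (coeff p i)" "m = m' + Poly_Mapping.single v i"
    using keys_mult[of "coeff p i" "Var v ^ i"] by (auto simp: Var_power split: if_splits)
  with assms[of i] i show "Poly_Mapping.lookup m v \<le> degree p"
    by (auto simp: free_of_def lookup_add)
qed

text \<open>Poly_Mapping makes polynomials over a domain a domain only for linearly ordered exponent
  vectors, so degree additivity in the univariate view needs a linear order on the variables.\<close>

instantiation sum :: (linorder, linorder) linorder
begin

definition less_eq_sum :: "'a + 'b \<Rightarrow> 'a + 'b \<Rightarrow> bool" where
  "less_eq_sum x y = (case (x, y) of
     (Inl a, Inl b) \<Rightarrow> a \<le> b | (Inl _, Inr _) \<Rightarrow> True | (Inr _, Inl _) \<Rightarrow> False | (Inr a, Inr b) \<Rightarrow> a \<le> b)"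

definition less_sum :: "'a + 'b \<Rightarrow> 'a + 'b \<Rightarrow> bool" where
  "less_sum x y = (x \<le> y \<and> \<not> y \<le> x)"

instance
proof
  fix x y z :: "'a + 'b"
  show "x < y \<longleftrightarrow> x \<le> y \<and> \<not> y \<le> x" by (simp add: less_sum_def)
  show "x \<le> x" by (cases x) (auto simp: less_eq_sum_def)
  show "x \<le> y \<Longrightarrow> y \<le> z \<Longrightarrow> x \<le> z" by (cases x; cases y; cases z) (auto simp: less_eq_sum_def)
  show "x \<le> y \<Longrightarrow> y \<le> x \<Longrightarrow> x = y" by (cases x; cases y) (auto simp: less_eq_sum_def)
  show "x \<le> y \<or> y \<le> x" by (cases x; cases y) (auto simp: less_eq_sum_def)
qed

end

lemma deg_pos_imp_in_vars: "0 < deg F v \<Longrightarrow> v \<in> vars F"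
  using deg_attained[of F v] by (force simp: vars_def in_keys_iff)

lemma deg_cls_pos:
  assumes "0 < cls F"
  shows "0 < deg F (Inr (cls F))"
proof -
  let ?S = "{p. 0 < deg F (Inr p)}"
  have "?S \<subseteq> Inr -` vars F"
    using deg_pos_imp_in_vars by auto
  then have "finite ?S"
    by (rule finite_subset) (simp add: vars_def finite_vimageI)
  then have "cls F \<in> insert 0 ?S"
    unfolding cls_def by (intro Max_in) auto
  with assms show ?thesis by auto
qed

lemma init_eq_lead_coeff: "init F = lead_coeff (to_univ (Inr (cls F)) F)"
  unfolding init_def Let_def degree_to_univ coeff_to_univ
  by (rule sum.cong) (auto simp: remove_var_def)

lemma pseudo_remainder_unique:
  fixes F :: "'k::idom mpoly"
  assumes "0 < deg F v"
    and "deg R v < deg F v" "c * G = Q * F + R"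
    and "deg R' v < deg F v" "c * G = Q' * F + R'"
  shows "R = R'"
proof -
  have "(Q - Q') * F = R' - R"
    using assms(3,5) by (simp add: algebra_simps)
  then have eq: "(to_univ v Q - to_univ v Q') * to_univ v F = to_univ v R' - to_univ v R"
    by (metis to_univ_diff to_univ_mult)
  have "degree (to_univ v R' - to_univ v R) < deg F v"
    by (rule degree_diff_less) (use assms in \<open>simp_all add: degree_to_univ\<close>)
  moreover have "to_univ v F \<noteq> 0"
    using assms(1) degree_to_univ[of v F] by auto
  ultimately have "to_univ v Q - to_univ v Q' = 0"
    using eq degree_mult_eq[of "to_univ v Q - to_univ v Q'" "to_univ v F"]
    by (cases "to_univ v Q - to_univ v Q' = 0") (simp_all add: degree_to_univ)
  with eq have "to_univ v R = to_univ v R'" by simp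
  then show ?thesis by (metis from_univ_to_univ)
qed

text \<open>Pseudo-division of the univariate views gives no control over whether quotient and
  remainder have coefficients free of \<open>v\<close>; substituting \<open>0\<close> for \<open>v\<close> in every coefficient
  enforces this without disturbing the identity, since the other terms are already free of \<open>v\<close>.\<close>

lemma pseudo_remainder_exists:
  fixes F G :: "'k::idom mpoly"
  assumes "0 < deg F v"
  shows "\<exists>Q R. deg R v < deg F v \<and> lead_coeff (to_univ v F) ^ (deg G v + 1 - deg F v) * G = Q * F + R"
proof -
  let ?f = "to_univ v F" and ?c = "lead_coeff (to_univ v F)" and ?s = "deg G v + 1 - deg F v"
  let ?z = "map_poly (subst_zero v)"
  have "?f \<noteq> 0"
    using assms degree_to_univ[of v F] by auto
  obtain q r where qr: "pseudo_divmod (to_univ v G) ?f = (q, r)"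
    by (metis surj_pair)
  have "smult (?c ^ ?s) (to_univ v G) = ?f * q + r"
    using pseudo_divmod(1)[OF \<open>?f \<noteq> 0\<close> qr] by (simp add: degree_to_univ)
  then have "?z (smult (?c ^ ?s) (to_univ v G)) = ?z (?f * q + r)"
    by simp
  then have "smult (?c ^ ?s) (to_univ v G) = ?f * ?z q + ?z r"
    by (simp add: map_poly_smult subst_zero_0 subst_zero_mult subst_zero_power map_poly_subst_zero_add
        map_poly_subst_zero_mult map_poly_subst_zero_to_univ subst_zero_id
        free_of_coeff_to_univ)
  then have "from_univ v (smult (?c ^ ?s) (to_univ v G)) = from_univ v (?f * ?z q + ?z r)"
    by simp
  then have "?c ^ ?s * G = from_univ v (?z q) * F + from_univ v (?z r)"
    by (simp add: from_univ_def from_univ_to_univ[unfolded from_univ_def] mult.commute)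
  moreover have "deg (from_univ v (?z r)) v < deg F v"
  proof (cases "r = 0")
    case True
    with assms show ?thesis by (simp add: from_univ_def)
  next
    case False
    then have "degree r < deg F v"
      using pseudo_divmod(2)[OF \<open>?f \<noteq> 0\<close> qr] by (simp add: degree_to_univ)
    moreover have "deg (from_univ v (?z r)) v \<le> degree (?z r)"
      by (rule deg_from_univ_le) (simp add: coeff_map_poly subst_zero_0 free_of_subst_zero)
    ultimately show ?thesis
      using map_poly_degree_leq[of "subst_zero v" r] by linarith
  qed
  ultimately show ?thesis by blast
qed

lemma prem_pseudo_division:
  fixes F G :: "'k::idom mpoly"
  defines "v \<equiv> Inr (cls F)"
  assumes "0 < cls F"
  shows "deg (prem G F) v < deg F v \<and> (\<exists>Q. init F ^ (deg G v + 1 - deg F v) * G = Q * F + prem G F)"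
proof -
  let ?P = "\<lambda>R. deg R v < deg F v \<and> (\<exists>Q. init F ^ (deg G v + 1 - deg F v) * G = Q * F + R)"
  have pos: "0 < deg F v"
    unfolding v_def using deg_cls_pos assms(2) .
  have unique: "\<exists>!R. ?P R"
  proof -
    obtain R where "?P R"
      using pseudo_remainder_exists[OF pos, of G] unfolding v_def init_eq_lead_coeff by blast
    moreover have "R' = R" if "?P R'" for R'
      using pseudo_remainder_unique[OF pos] that \<open>?P R\<close> by blast
    ultimately show ?thesis by blast
  qed
  have "prem G F = (THE R. ?P R)"
    using assms(2) by (simp add: prem_def v_def Let_def)
  with theI'[OF unique] show ?thesis
    by simp
qed

section \<open>Zeros of a system and of its characteristic sets\<close>

lemma eval_eq_0_if_prem_eq_0:
  fixes c G :: "'k::field mpoly"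
  assumes "0 < cls c" "eval p c = 0" "eval p (init c) \<noteq> 0" "eval p (prem G c) = 0"
  shows "eval p G = 0"
proof -
  obtain Q k where "init c ^ k * G = Q * c + prem G c"
    using prem_pseudo_division[OF assms(1)] by blast
  then have "eval p (init c) ^ k * eval p G = 0"
    by (metis assms(2,4) eval_add eval_mult eval_power mult_zero_right add_0)
  with assms(3) show ?thesis by simp
qed

lemma eval_eq_0_if_foldr_prem_eq_0:
  fixes G :: "'k::field mpoly"
  assumes "\<And>c. c \<in> set cs \<Longrightarrow> 0 < cls c \<and> eval p c = 0 \<and> eval p (init c) \<noteq> 0"
    and "eval p (foldr (\<lambda>c r. prem r c) cs G) = 0"
  shows "eval p G = 0"
  using assms by (induction cs) (auto intro: eval_eq_0_if_prem_eq_0)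

lemma (in linorder) set_sorted_key_list_of_set_inj:
  assumes "inj_on f A" "finite A"
  shows "set (sorted_key_list_of_set f A) = A"
proof -
  interpret folding_insort_key "(\<le>)" "(<)" A f
    using assms(1) by unfold_locales
  show ?thesis
    using assms(2) by (rule set_sorted_key_list_of_set[OF subset_refl])
qed

lemma eval_eq_0_if_prem_chain_eq_0:
  fixes G :: "'k::field mpoly"
  assumes "noncontra_chain C"
    and "\<And>c. c \<in> C \<Longrightarrow> eval p c = 0 \<and> eval p (init c) \<noteq> 0"
    and "prem_chain G C = 0"
  shows "eval p G = 0"
proof -
  let ?L = "sorted_key_list_of_set cls C"
  have "set ?L = C"
    using assms(1) by (intro set_sorted_key_list_of_set_inj) (auto simp: noncontra_chain_def)
  then have "\<And>c. c \<in> set ?L \<Longrightarrow> 0 < cls c \<and> eval p c = 0 \<and> eval p (init c) \<noteq> 0"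
    using assms(1,2) by (auto simp: noncontra_chain_def)
  moreover have "eval p (foldr (\<lambda>c r. prem r c) ?L G) = 0"
    using assms(3) by (simp add: prem_chain_def eval_0)
  ultimately show ?thesis
    by (rule eval_eq_0_if_foldr_prem_eq_0)
qed

lemma eval_eq_0_if_in_ideal:
  assumes "F \<in> ideal_KUX d n P" "\<And>G. G \<in> P \<Longrightarrow> eval p G = 0"
  shows "eval p F = 0"
proof -
  from assms(1) obtain S q where "F = (\<Sum>G\<in>S. q G * G)" "S \<subseteq> P"
    unfolding ideal_KUX_def by blast
  with assms(2) show ?thesis
    by (auto simp: eval_sum eval_mult intro!: sum.neutral)
qed

lemma cls_eq_0_if_KU:
  assumes "F \<in> KU d"
  shows "cls F = 0"
proof -
  have "Inr p \<notin> vars F" for p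
    using assms by (auto simp: KU_def)
  then have "{p. 0 < deg F (Inr p)} = {}"
    using deg_pos_imp_in_vars by blast
  then show ?thesis
    by (simp add: cls_def)
qed

lemma eval_KU_indep: "F \<in> KU d \<Longrightarrow> eval (pt a b) F = eval (pt a b') F"
  by (rule eval_cong_vars) (auto simp: KU_def pt_def)

lemma contra_chain_not_noncontra: "contra_chain d C \<Longrightarrow> \<not> noncontra_chain C"
  unfolding contra_chain_def noncontra_chain_def using cls_eq_0_if_KU by fastforce

lemma zero_set_empty_if_contra_char_set:
  assumes "char_set d n P C" "contra_chain d C" "a \<notin> VU C"
  shows "V a P = {}"
proof -
  obtain F where F: "C = {F}" "F \<in> KU d"
    using assms(2) unfolding contra_chain_def by blast
  have "eval (pt a b) F = 0" if "b \<in> V a P" for b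
    using assms(1) F that by (auto simp: char_set_def V_def intro: eval_eq_0_if_in_ideal)
  moreover have "eval (pt a b) F \<noteq> 0" for b
    using assms(3) eval_KU_indep[OF F(2), of a b "\<lambda>_. 0"] by (simp add: VU_def F(1))
  ultimately show ?thesis by blast
qed

lemma zero_set_split_by_char_set:
  fixes P :: "'k::field mpoly set"
  assumes "char_set d n P C" "noncontra_chain C"
  shows "V a P = V_spec a C (chain_init C) \<union> (\<Union>c\<in>C. V a (P \<union> C \<union> {init c}))"
proof (intro equalityI subsetI)
  fix b assume "b \<in> V a P"
  then have P_zero: "\<And>G. G \<in> P \<Longrightarrow> eval (pt a b) G = 0"
    by (simp add: V_def)
  then have C_zero: "\<And>c. c \<in> C \<Longrightarrow> eval (pt a b) c = 0"
    using assms(1) by (auto simp: char_set_def intro: eval_eq_0_if_in_ideal)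
  show "b \<in> V_spec a C (chain_init C) \<union> (\<Union>c\<in>C. V a (P \<union> C \<union> {init c}))"
  proof (cases "eval (pt a b) (chain_init C) = 0")
    case True
    then obtain c where "c \<in> C" "eval (pt a b) (init c) = 0"
      using assms(2) by (auto simp: chain_init_def eval_prod noncontra_chain_def)
    with P_zero C_zero show ?thesis
      by (auto simp: V_def)
  next
    case False
    with C_zero show ?thesis
      by (simp add: V_spec_def)
  qed
next
  fix b assume "b \<in> V_spec a C (chain_init C) \<union> (\<Union>c\<in>C. V a (P \<union> C \<union> {init c}))"
  then show "b \<in> V a P"
  proof
    assume b: "b \<in> V_spec a C (chain_init C)"
    then have "\<And>c. c \<in> C \<Longrightarrow> eval (pt a b) c = 0 \<and> eval (pt a b) (init c) \<noteq> 0"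
      using assms(2) by (auto simp: V_spec_def chain_init_def eval_prod noncontra_chain_def)
    with assms show "b \<in> V a P"
      by (auto simp: V_def char_set_def intro: eval_eq_0_if_prem_chain_eq_0)
  qed (auto simp: V_def)
qed

lemma zero_set_wu_decomp:
  fixes P :: "'k::field mpoly set"
  assumes "wu_decomp d n P D"
    and "a \<notin> (\<Union>CS\<in>{C\<in>D. contra_chain d C}. VU CS)"
  shows "V a P = (\<Union>C\<in>{C\<in>D. noncontra_chain C}. V_spec a C (chain_init C))"
  using assms
proof (induction rule: wu_decomp.induct)
  case (contra P C)
  then show ?case
    using zero_set_empty_if_contra_char_set contra_chain_not_noncontra by fastforce
next
  case (noncontra P C Ds)
  have IH: "V a (P \<union> C \<union> {init c}) = (\<Union>C'\<in>{C'\<in>Ds c. noncontra_chain C'}. V_spec a C' (chain_init C'))"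
    if "c \<in> C" for c
    using noncontra.IH noncontra.prems that by blast
  have "V a P = V_spec a C (chain_init C) \<union> (\<Union>c\<in>C. V a (P \<union> C \<union> {init c}))"
    using noncontra.hyps(1,2) by (rule zero_set_split_by_char_set)
  also have "\<dots> = V_spec a C (chain_init C) \<union>
      (\<Union>c\<in>C. \<Union>C'\<in>{C'\<in>Ds c. noncontra_chain C'}. V_spec a C' (chain_init C'))"
    using IH by auto
  also have "\<dots> = (\<Union>C'\<in>{C'\<in>{C} \<union> (\<Union>c\<in>C. Ds c). noncontra_chain C'}. V_spec a C' (chain_init C'))"
    using noncontra.hyps(2) by auto
  finally show ?case .
qed

theorem corollary2:
  fixes P :: "'k::field mpoly set" and D :: "'k mpoly set set"
    and d n :: nat and a :: "nat \<Rightarrow> 'k alg_closure"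
  assumes "parametric_system d n P"
    and "wu_decomp d n P D"
    and "a \<notin> (\<Union>CS\<in>{C\<in>D. contra_chain d C}. VU CS)"
  shows "V a P = (\<Union>C\<in>{C\<in>D. noncontra_chain C}. V_spec a C (chain_init C))"
  using assms(2,3) by (rule zero_set_wu_decomp)

end
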